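(* Let $R$ be an $F$-finite ring of prime characteristic $p>0$ and let $R\to S$ be a finite extension. Then the trace ideal $\tau_{S/R}=\operatorname{Im}\big(\operatorname{Hom}_R(S,R)\xrightarrow{\ \psi\mapsto\psi(1)\ }R\big)$ is a compatible ideal of $R$; that is, for every $e\in\mathbb{N}$ and every $\phi\in\operatorname{Hom}_R(F^e_*R,R)$ we have $\phi(F^e_*\tau_{S/R})\subseteq\tau_{S/R}$.
   Context: $F^e_*R$ denotes $R$ viewed as an $R$-module via the $e$-th iterate of Frobenius. $R$ is $F$-finite if $F^e_*R$ is a finitely generated $R$-module. An ideal $I\subseteq R$ is compatible if for all $e\in\mathbb{N}$ and all $\varphi\in\operatorname{Hom}_R(F^e_*R,R)$ one has $\varphi(F^e_*I)\subseteq I$. For an $R$-algebra $S$, the trace ideal $\tau_{S/R}$ is the image of the evaluation-at-$1$ map $\operatorname{Hom}_R(S,R)\to R$. *)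

theory Defs
  imports Main "HOL-Computational_Algebra.Primes"
begin

definition is_ring_hom :: "('a::comm_ring_1 \<Rightarrow> 'b::comm_ring_1) \<Rightarrow> bool" where
  "is_ring_hom f \<longleftrightarrow> f 1 = 1 \<and> (\<forall>x y. f (x + y) = f x + f y) \<and> (\<forall>x y. f (x * y) = f x * f y)"

definition finite_map :: "('a::comm_ring_1 \<Rightarrow> 'b::comm_ring_1) \<Rightarrow> bool" where
  "finite_map f \<longleftrightarrow> (\<exists>G. finite G \<and> (\<forall>s. \<exists>c. s = (\<Sum>g\<in>G. f (c g) * g)))"

definition hom_R :: "('a::comm_ring_1 \<Rightarrow> 'b::comm_ring_1) \<Rightarrow> ('b \<Rightarrow> 'a) set" where
  "hom_R f = {\<psi>. (\<forall>x y. \<psi> (x + y) = \<psi> x + \<psi> y) \<and> (\<forall>r s. \<psi> (f r * s) = r * \<psi> s)}"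

definition trace_ideal :: "('a::comm_ring_1 \<Rightarrow> 'b::comm_ring_1) \<Rightarrow> 'a set" where
  "trace_ideal f = {\<psi> 1 | \<psi>. \<psi> \<in> hom_R f}"

text \<open>Hom_R(F^e_* R, R): additive maps with phi(r^(p^e) x) = r phi(x).\<close>
definition frob_hom :: "nat \<Rightarrow> nat \<Rightarrow> ('a::comm_ring_1 \<Rightarrow> 'a) set" where
  "frob_hom p e = {\<phi>. (\<forall>x y. \<phi> (x + y) = \<phi> x + \<phi> y) \<and> (\<forall>r x. \<phi> (r ^ (p ^ e) * x) = r * \<phi> x)}"

text \<open>F^e_* R is a finitely generated R-module.\<close>
definition frob_fin_gen :: "nat \<Rightarrow> nat \<Rightarrow> 'a::comm_ring_1 itself \<Rightarrow> bool" where
  "frob_fin_gen p e _ \<longleftrightarrow> (\<exists>G::'a set. finite G \<and> (\<forall>x. \<exists>c. x = (\<Sum>g\<in>G. (c g) ^ (p ^ e) * g)))"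

definition F_finite :: "nat \<Rightarrow> 'a::comm_ring_1 itself \<Rightarrow> bool" where
  "F_finite p T \<longleftrightarrow> (\<forall>e. frob_fin_gen p e T)"

definition compatible :: "nat \<Rightarrow> 'a::comm_ring_1 set \<Rightarrow> bool" where
  "compatible p I \<longleftrightarrow> (\<forall>e. \<forall>\<phi>\<in>frob_hom p e. \<forall>x\<in>I. \<phi> x \<in> I)"

end

theory Submission
  imports Defs
begin

text \<open>If \<psi> \<in> Hom_R(S,R) and \<phi> \<in> Hom_R(F^e_* R, R), then s \<mapsto> \<phi>(\<psi>(s^(p^e))) lies in
  Hom_R(S,R): additivity is the Frobenius of S, and R-linearity holds because \<psi> turns
  f(r)^(p^e) into r^(p^e), which \<phi> pulls out as r. Evaluating at 1 gives \<phi>(\<psi>(1)), so the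
  trace ideal is stable under \<phi>.\<close>

lemma is_ring_hom_of_nat:
  assumes "is_ring_hom f"
  shows "f (of_nat n) = of_nat n"
proof (induction n)
  case 0
  have "f 0 = f 0 + f 0" using assms unfolding is_ring_hom_def by (metis add_0)
  then show ?case by simp
next
  case (Suc n)
  then show ?case using assms unfolding is_ring_hom_def by simp
qed

lemma is_ring_hom_power:
  assumes "is_ring_hom f"
  shows "f (x ^ n) = f x ^ n"
  using assms by (induction n) (auto simp: is_ring_hom_def)

lemma CHAR_eq_if_inj_ring_hom:
  fixes f :: "'a::comm_ring_1 \<Rightarrow> 'b::comm_ring_1"
  assumes hom: "is_ring_hom f" and "inj f"
  shows "CHAR('b) = CHAR('a)"
proof (rule CHAR_eqI)
  show "of_nat CHAR('a) = (0::'b)"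
    using is_ring_hom_of_nat[OF hom, of "CHAR('a)"] is_ring_hom_of_nat[OF hom, of 0] by simp
next
  fix n assume "of_nat n = (0::'b)"
  then have "f (of_nat n) = f (of_nat 0)"
    using is_ring_hom_of_nat[OF hom, of n] is_ring_hom_of_nat[OF hom, of 0] by simp
  then have "(of_nat n :: 'a) = 0" using \<open>inj f\<close> by (metis injD of_nat_0)
  then show "CHAR('a) dvd n" by (simp add: of_nat_eq_0_iff_char_dvd)
qed

lemma frob_hom_comp_hom_R_in_hom_R:
  fixes f :: "'a::comm_ring_1 \<Rightarrow> 'b::comm_ring_1"
  assumes hom: "is_ring_hom f" and p: "prime p" "CHAR('b) = p"
    and \<phi>: "\<phi> \<in> frob_hom p e" and \<psi>: "\<psi> \<in> hom_R f"
  shows "(\<lambda>s. \<phi> (\<psi> (s ^ (p ^ e)))) \<in> hom_R f"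
  unfolding hom_R_def
proof (intro CollectI conjI allI)
  fix s t :: 'b
  have "(s + t) ^ (p ^ e) = s ^ (p ^ e) + t ^ (p ^ e)"
    using freshmans_dream'[of "p ^ e" e s t] p by simp
  then show "\<phi> (\<psi> ((s + t) ^ (p ^ e))) = \<phi> (\<psi> (s ^ (p ^ e))) + \<phi> (\<psi> (t ^ (p ^ e)))"
    using \<phi> \<psi> unfolding frob_hom_def hom_R_def by simp
next
  fix r s
  have "(f r * s) ^ (p ^ e) = f (r ^ (p ^ e)) * s ^ (p ^ e)"
    by (simp add: power_mult_distrib is_ring_hom_power[OF hom])
  then show "\<phi> (\<psi> ((f r * s) ^ (p ^ e))) = r * \<phi> (\<psi> (s ^ (p ^ e)))"
    using \<phi> \<psi> unfolding frob_hom_def hom_R_def by simp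
qed

theorem mainTheorem2:
  fixes f :: "'a::comm_ring_1 \<Rightarrow> 'b::comm_ring_1" and p :: nat
  assumes "prime p" and "CHAR('a) = p"
    and "F_finite p TYPE('a)"
    and "is_ring_hom f" and "inj f" and "finite_map f"
  shows "compatible p (trace_ideal f)"
  unfolding compatible_def trace_ideal_def
proof (intro allI ballI)
  fix e and \<phi> :: "'a \<Rightarrow> 'a" and x
  assume \<phi>: "\<phi> \<in> frob_hom p e" and "x \<in> {\<psi> 1 |\<psi>. \<psi> \<in> hom_R f}"
  then obtain \<psi> where \<psi>: "\<psi> \<in> hom_R f" and x: "x = \<psi> 1" by blast
  have "CHAR('b) = p"
    using CHAR_eq_if_inj_ring_hom[OF assms(4,5)] assms(2) by simp
  then have "(\<lambda>s. \<phi> (\<psi> (s ^ (p ^ e)))) \<in> hom_R f"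
    using frob_hom_comp_hom_R_in_hom_R[OF assms(4) assms(1) _ \<phi> \<psi>] by simp
  then show "\<phi> x \<in> {\<psi> 1 |\<psi>. \<psi> \<in> hom_R f}"
    unfolding x by (metis (mono_tags, lifting) mem_Collect_eq power_one)
qed

end
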